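(* (i) Let $F$ be a graph fibration. Then $$\mathscr{C}_F:=\{(K,\mathbf{a},\mathbf{b})\mid (K,g_{\mathbf{a}}^{-1}g_{\mathbf{b}})\in F\}=\{(K,\mathbf{a},\mathbf{b})\mid (K,g_{\mathbf{b}}g_{\mathbf{a}}^{-1})\in F\}$$ is a skew graph category. (ii) Conversely, let $\mathscr{C}$ be a skew graph category. Then $$F_{\mathscr{C}}:=\{(K,g_{\mathbf{a}}^{-1}g_{\mathbf{b}})\mid (K,\mathbf{a},\mathbf{b})\in\mathscr{C}\}=\{(K,g_{\mathbf{b}}g_{\mathbf{a}}^{-1})\mid (K,\mathbf{a},\mathbf{b})\in\mathscr{C}\}=\{(K,g_{\mathbf{a}})\mid (K,\emptyset,\mathbf{a})\in\mathscr{C}\}$$ is a graph fibration. (iii) The assignments $F\mapsto\mathscr{C}_F$ and $\mathscr{C}\mapsto F_{\mathscr{C}}$ are mutually inverse, so they give a one-to-one correspondence between graph fibrations and skew graph categories. Under this correspondence, a graph fibration $F$ is easy if and only if $\mathscr{C}_F$ is a group-theoretical graph category.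
   Context: Graphs are finite, undirected, without multiple edges, loops allowed, considered up to isomorphism; $N_k$ is the edgeless graph on $k$ vertices ($N_0$ the empty graph). For a set $V$, $\mathbb{Z}_2^{*V}$ is the group generated by the elements of $V$ subject to $v^2=e$ for all $v\in V$. For a word (tuple) $\mathbf{a}=(a_1,\dots,a_k)$ over $V$, $g_{\mathbf{a}}:=a_1a_2\cdots a_k\in\mathbb{Z}_2^{*V}$; $\mathbf{a}^*$ is the reversed word. A map $\phi\colon V\to V'$ induces maps on words and a homomorphism $\mathbb{Z}_2^{*V}\to\mathbb{Z}_2^{*V'}$, all denoted $\phi$. Quotients: for a partition $\pi$ of $V(K)$, $K/\pi$ has the blocks of $\pi$ as vertices, with an edge between two (possibly equal) blocks iff $K$ has an edge between some of their elements; $q_\pi\colon V(K)\to V(K/\pi)$ is the quotient map. A vertex overlap of graphs $K,H$ is an injective partial function $f$ from $V(K)$ to $V(H)$, i.e. a subset $f\subset V(K)\times V(H)$ in which each vertex occurs at most once; $K\cup_f H$ is the quotient of the disjoint union $K\sqcup H$ identifying $v$ with $w$ for all $(v,w)\in f$; $f_K,f_H$ denote the induced maps of $V(K),V(H)$ into $V(K\cup_fH)$. Graph fibration: a set $F$ of pairs $(K,a)$ with $K$ a graph and $a\in\mathbb{Z}_2^{*V(K)}$, taken up to the equivalence $(K,a)\equiv(K',\phi(a))$ for graph isomorphisms $\phi\colon K\to K'$, such that $(N_0,e),(N_1,e)\in F$ and: (F1) each $F(K):=\{a\mid (K,a)\in F\}$ is empty or a normal subgroup of $\mathbb{Z}_2^{*V(K)}$;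 (F2) $\phi(F(K))=F(K)$ for every automorphism $\phi$ of $K$; (F3) if $(K,a),(H,b)\in F$ and $f$ is a vertex overlap of $K,H$, then $(K\cup_fH,f_K(a)f_H(b))\in F$. We write $K\in F$ if $F(K)\neq\emptyset$. $F$ is easy if moreover (F4): for $K\in F$ and every partition $\pi$ of $V(K)$, $q_\pi(F(K))\subset F(K/\pi)$. Bilabelled graphs: $\mathbf{K}=(K,\mathbf{a},\mathbf{b})$ with $K$ a graph, $\mathbf{a}\in V(K)^k$ (inputs), $\mathbf{b}\in V(K)^l$ (outputs), up to isomorphism of $K$ preserving the tuples; $\mathscr{G}(k,l)$ is the set of these, and $\mathscr{C}(k,l):=\mathscr{C}\cap\mathscr{G}(k,l)$. Operations: tensor product $(K,\mathbf{a},\mathbf{b})\otimes(H,\mathbf{c},\mathbf{d})=(K\sqcup H,\mathbf{a}\mathbf{c},\mathbf{b}\mathbf{d})$; composition (when $|\mathbf{b}|=|\mathbf{c}|$) $(H,\mathbf{c},\mathbf{d})\cdot(K,\mathbf{a},\mathbf{b})=(H\cdot K,\mathbf{a},\mathbf{d})$, where $H\cdot K$ is the quotient of $K\sqcup H$ identifying $b_i$ with $c_i$ for all $i$; involution $(K,\mathbf{a},\mathbf{b})^*=(K,\mathbf{b},\mathbf{a})$; $f$-union $(K,\mathbf{a},\mathbf{b})\cup_f(H,\mathbf{c},\mathbf{d})=(K\cup_fH,f_K(\mathbf{a})f_H(\mathbf{c}),f_K(\mathbf{b})f_H(\mathbf{d}))$; quotient $(K,\mathbf{a},\mathbf{b})/\pi=(K/\pi,q_\pi(\mathbf{a}),q_\pi(\mathbf{b}))$.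 Let $\mathbf{0}=(N_0,\emptyset,\emptyset)$ and, for a one-vertex loopless graph $M$ with vertex $v$, $\mathbf{M}^{k,l}=(M,(v,\dots,v),(v,\dots,v))$ with $k$ inputs and $l$ outputs. For a tuple $\mathbf{b}$, $\ker\mathbf{b}$ is the partition of its positions according to equal entries. A graph category is a set $\mathscr{C}$ of bilabelled graphs containing $\mathbf{M}^{1,1},\mathbf{M}^{0,2},\mathbf{0}$ and closed under tensor products, compositions and involution; it is group-theoretical if it is moreover closed under all quotients $\mathbf{K}\mapsto\mathbf{K}/\pi$. A skew graph category is a set $\mathscr{C}$ of bilabelled graphs containing $\mathbf{0},\mathbf{M}^{1,1},\mathbf{M}^{0,2}$ and closed under all $f$-unions (for all vertex overlaps $f$), under restricted compositions ($\mathbf{H}\cdot\mathbf{K}$ for $\mathbf{K}=(K,\mathbf{a},\mathbf{b}),\mathbf{H}=(H,\mathbf{c},\mathbf{d})\in\mathscr{C}$ with $\ker\mathbf{b}=\ker\mathbf{c}$), and under involution. *)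

theory Defs
  imports "HOL-Algebra.Coset"
begin

text \<open>A finite undirected graph with loops allowed and no multiple edges, with
vertices drawn from nat.  Edges are nonempty vertex sets of size at most 2
(size 1 = loop).  Graphs "up to isomorphism" are handled by requiring all
families of graphs below to be closed under isomorphism.\<close>

type_synonym graph = "nat set \<times> nat set set"

definition V :: "graph \<Rightarrow> nat set" where "V K = fst K"
definition E :: "graph \<Rightarrow> nat set set" where "E K = snd K"

definition wf_graph :: "graph \<Rightarrow> bool" where
  "wf_graph K \<longleftrightarrow> finite (V K) \<and>
     (\<forall>e\<in>E K. e \<subseteq> V K \<and> e \<noteq> {} \<and> card e \<le> 2)"

definition graph_iso :: "(nat \<Rightarrow> nat) \<Rightarrow> graph \<Rightarrow> graph \<Rightarrow> bool" where
  "graph_iso \<phi> K K' \<longleftrightarrow> bij_betw \<phi> (V K) (V K') \<and> (image \<phi>) ` E K = E K'"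

definition N0 :: graph where "N0 = ({}, {})"
definition N1 :: graph where "N1 = ({0}, {})"
definition M :: graph where "M = ({0}, {})"

definition inlv :: "nat \<Rightarrow> nat" where "inlv v = 2 * v"
definition inrv :: "nat \<Rightarrow> nat" where "inrv w = 2 * w + 1"

definition dunion :: "graph \<Rightarrow> graph \<Rightarrow> graph" where
  "dunion K H = (inlv ` V K \<union> inrv ` V H, (image inlv) ` E K \<union> (image inrv) ` E H)"

text \<open>Quotients.  A partition of V(K) is represented by an equivalence relation
R on V(K); each block is represented by its least element.\<close>
definition qmap :: "nat rel \<Rightarrow> nat \<Rightarrow> nat" where
  "qmap R v = Min (R `` {v})"

definition gquot :: "nat rel \<Rightarrow> graph \<Rightarrow> graph" where
  "gquot R K = (qmap R ` V K, (image (qmap R)) ` E K)"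

definition eqcl :: "nat set \<Rightarrow> nat rel \<Rightarrow> nat rel" where
  "eqcl S P = (Id_on S \<union> P \<union> P\<inverse>)\<^sup>+"

definition glue_rel :: "graph \<Rightarrow> graph \<Rightarrow> (nat \<times> nat) set \<Rightarrow> nat rel" where
  "glue_rel K H P = eqcl (V (dunion K H)) ((\<lambda>(v, w). (inlv v, inrv w)) ` P)"

definition glue :: "graph \<Rightarrow> graph \<Rightarrow> (nat \<times> nat) set \<Rightarrow> graph" where
  "glue K H P = gquot (glue_rel K H P) (dunion K H)"

definition glK :: "graph \<Rightarrow> graph \<Rightarrow> (nat \<times> nat) set \<Rightarrow> nat \<Rightarrow> nat" where
  "glK K H P = qmap (glue_rel K H P) \<circ> inlv"

definition glH :: "graph \<Rightarrow> graph \<Rightarrow> (nat \<times> nat) set \<Rightarrow> nat \<Rightarrow> nat" where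
  "glH K H P = qmap (glue_rel K H P) \<circ> inrv"

text \<open>Vertex overlap: injective partial function from V(K) to V(H).
K \<union>_f H = glue K H f, f_K = glK K H f, f_H = glH K H f.\<close>
definition vertex_overlap :: "graph \<Rightarrow> graph \<Rightarrow> (nat \<times> nat) set \<Rightarrow> bool" where
  "vertex_overlap K H f \<longleftrightarrow> f \<subseteq> V K \<times> V H \<and>
     (\<forall>(v, w)\<in>f. \<forall>(v', w')\<in>f. v = v' \<longleftrightarrow> w = w')"

text \<open>Elements are reduced words (no two equal adjacent letters); \<open>red\<close> is the
free reduction (normal form).\<close>
fun red :: "nat list \<Rightarrow> nat list" where
  "red [] = []"
| "red (x # xs) = (case red xs of [] \<Rightarrow> [x] | y # ys \<Rightarrow> (if x = y then ys else x # y # ys))"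

definition Z2F :: "nat set \<Rightarrow> nat list monoid" where
  "Z2F S = \<lparr>carrier = {w. set w \<subseteq> S \<and> red w = w}, mult = (\<lambda>x y. red (x @ y)), one = []\<rparr>"

definition gw :: "nat list \<Rightarrow> nat list" where "gw a = red a"
definition gmul :: "nat list \<Rightarrow> nat list \<Rightarrow> nat list" where "gmul x y = red (x @ y)"
definition ginv :: "nat list \<Rightarrow> nat list" where "ginv x = red (rev x)"
definition gmap :: "(nat \<Rightarrow> nat) \<Rightarrow> nat list \<Rightarrow> nat list" where "gmap \<phi> x = red (map \<phi> x)"

type_synonym gfam = "(graph \<times> nat list) set"

definition Fib :: "gfam \<Rightarrow> graph \<Rightarrow> nat list set" where
  "Fib F K = {a. (K, a) \<in> F}"

text \<open>A set of pairs (K,a) taken up to isomorphism: represented by an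
isomorphism-closed set of concrete pairs.\<close>
definition gfam_rep :: "gfam \<Rightarrow> bool" where
  "gfam_rep F \<longleftrightarrow> (\<forall>(K, a)\<in>F. wf_graph K \<and> a \<in> carrier (Z2F (V K))) \<and>
     (\<forall>K K' \<phi> a. (K, a) \<in> F \<longrightarrow> graph_iso \<phi> K K' \<longrightarrow> (K', gmap \<phi> a) \<in> F)"

definition graph_fibration :: "gfam \<Rightarrow> bool" where
  "graph_fibration F \<longleftrightarrow> gfam_rep F \<and> (N0, []) \<in> F \<and> (N1, []) \<in> F \<and>
     (\<forall>K. wf_graph K \<longrightarrow> Fib F K = {} \<or> Fib F K \<lhd> Z2F (V K)) \<and>
     (\<forall>K \<phi>. wf_graph K \<longrightarrow> graph_iso \<phi> K K \<longrightarrow> gmap \<phi> ` Fib F K = Fib F K) \<and>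
     (\<forall>K a H b f. (K, a) \<in> F \<longrightarrow> (H, b) \<in> F \<longrightarrow> vertex_overlap K H f \<longrightarrow>
        (glue K H f, gmul (gmap (glK K H f) a) (gmap (glH K H f) b)) \<in> F)"

definition easy_fibration :: "gfam \<Rightarrow> bool" where
  "easy_fibration F \<longleftrightarrow> graph_fibration F \<and>
     (\<forall>K R. Fib F K \<noteq> {} \<longrightarrow> equiv (V K) R \<longrightarrow>
        gmap (qmap R) ` Fib F K \<subseteq> Fib F (gquot R K))"

type_synonym bgraph = "graph \<times> nat list \<times> nat list"

fun wf_bgraph :: "bgraph \<Rightarrow> bool" where
  "wf_bgraph (K, a, b) \<longleftrightarrow> wf_graph K \<and> set a \<subseteq> V K \<and> set b \<subseteq> V K"

fun bgraph_iso :: "(nat \<Rightarrow> nat) \<Rightarrow> bgraph \<Rightarrow> bgraph \<Rightarrow> bool" where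
  "bgraph_iso \<phi> (K, a, b) (K', a', b') \<longleftrightarrow> graph_iso \<phi> K K' \<and> map \<phi> a = a' \<and> map \<phi> b = b'"

text \<open>A set of bilabelled graphs up to isomorphism: an isomorphism-closed set of
well-formed concrete bilabelled graphs.\<close>
definition bset_rep :: "bgraph set \<Rightarrow> bool" where
  "bset_rep C \<longleftrightarrow> (\<forall>X\<in>C. wf_bgraph X) \<and>
     (\<forall>X Y \<phi>. X \<in> C \<longrightarrow> bgraph_iso \<phi> X Y \<longrightarrow> Y \<in> C)"

definition bzero :: bgraph where "bzero = (N0, [], [])"
definition M11 :: bgraph where "M11 = (M, [0], [0])"
definition M02 :: bgraph where "M02 = (M, [], [0, 0])"

fun btensor :: "bgraph \<Rightarrow> bgraph \<Rightarrow> bgraph" where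
  "btensor (K, a, b) (H, c, d) = (dunion K H, map inlv a @ map inrv c, map inlv b @ map inrv d)"

text \<open>bcomp (H,c,d) (K,a,b) = (H,c,d) \<cdot> (K,a,b)  (used when |b| = |c|).\<close>
fun bcomp :: "bgraph \<Rightarrow> bgraph \<Rightarrow> bgraph" where
  "bcomp (H, c, d) (K, a, b) =
     (let P = {(b ! i, c ! i) | i. i < length b}
      in (glue K H P, map (glK K H P) a, map (glH K H P) d))"

fun binv :: "bgraph \<Rightarrow> bgraph" where
  "binv (K, a, b) = (K, b, a)"

fun bfunion :: "bgraph \<Rightarrow> (nat \<times> nat) set \<Rightarrow> bgraph \<Rightarrow> bgraph" where
  "bfunion (K, a, b) f (H, c, d) =
     (glue K H f, map (glK K H f) a @ map (glH K H f) c, map (glK K H f) b @ map (glH K H f) d)"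

fun bquot :: "nat rel \<Rightarrow> bgraph \<Rightarrow> bgraph" where
  "bquot R (K, a, b) = (gquot R K, map (qmap R) a, map (qmap R) b)"

fun inputs :: "bgraph \<Rightarrow> nat list" where "inputs (K, a, b) = a"
fun outputs :: "bgraph \<Rightarrow> nat list" where "outputs (K, a, b) = b"

text \<open>ker b = ker c (as partitions of the positions; in particular same length).\<close>
definition same_ker :: "nat list \<Rightarrow> nat list \<Rightarrow> bool" where
  "same_ker b c \<longleftrightarrow> length b = length c \<and>
     (\<forall>i < length b. \<forall>j < length b. b ! i = b ! j \<longleftrightarrow> c ! i = c ! j)"

definition graph_category :: "bgraph set \<Rightarrow> bool" where
  "graph_category C \<longleftrightarrow> bset_rep C \<and> M11 \<in> C \<and> M02 \<in> C \<and> bzero \<in> C \<and>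
     (\<forall>X\<in>C. \<forall>Y\<in>C. btensor X Y \<in> C) \<and>
     (\<forall>X\<in>C. \<forall>Y\<in>C. length (outputs X) = length (inputs Y) \<longrightarrow> bcomp Y X \<in> C) \<and>
     (\<forall>X\<in>C. binv X \<in> C)"

definition group_theoretical :: "bgraph set \<Rightarrow> bool" where
  "group_theoretical C \<longleftrightarrow> graph_category C \<and>
     (\<forall>K a b R. (K, a, b) \<in> C \<longrightarrow> equiv (V K) R \<longrightarrow> bquot R (K, a, b) \<in> C)"

definition skew_graph_category :: "bgraph set \<Rightarrow> bool" where
  "skew_graph_category C \<longleftrightarrow> bset_rep C \<and> bzero \<in> C \<and> M11 \<in> C \<and> M02 \<in> C \<and>
     (\<forall>K a b H c d f. (K, a, b) \<in> C \<longrightarrow> (H, c, d) \<in> C \<longrightarrow> vertex_overlap K H f \<longrightarrow>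
        bfunion (K, a, b) f (H, c, d) \<in> C) \<and>
     (\<forall>K a b H c d. (K, a, b) \<in> C \<longrightarrow> (H, c, d) \<in> C \<longrightarrow> same_ker b c \<longrightarrow>
        bcomp (H, c, d) (K, a, b) \<in> C) \<and>
     (\<forall>X\<in>C. binv X \<in> C)"

definition C_of :: "gfam \<Rightarrow> bgraph set" where
  "C_of F = {(K, a, b). wf_bgraph (K, a, b) \<and> (K, gmul (ginv (gw a)) (gw b)) \<in> F}"

definition F_of :: "bgraph set \<Rightarrow> gfam" where
  "F_of C = {(K, gmul (ginv (gw a)) (gw b)) | K a b. (K, a, b) \<in> C}"

end

theory Submission
  imports Defs
begin

text \<open>
  In a skew graph category one can move a label from the inputs to the outputs (compose with the
  element \<open>(N, a, x x a)\<close> built from \<open>M\<^sup>0\<^sup>,\<^sup>2\<close> and identities), so \<open>(K, a, b) \<in> C\<close> iff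
  \<open>(K, \<emptyset>, a\<^sup>* b) \<in> C\<close>; inserting or deleting a pair \<open>x x\<close> shows that this only depends on the
  reduced word \<open>g\<^sub>a\<^sup>-\<^sup>1 g\<^sub>b\<close>. Unions along the identity of \<open>K\<close> multiply these words and unions with
  identity elements conjugate them, so they form normal subgroups, and \<open>f\<close>-unions give (F3).
  Conversely, for a fibration the words attached to unions and restricted compositions are
  products of conjugates of the given ones, because the glued labels cancel.
  Quotients of bilabelled graphs are exactly axiom (F4), and a skew category closed under
  quotients is a graph category: tensor products are unions along \<open>\<emptyset>\<close>, and an arbitrary
  composition is a composition on one graph inside a quotient of the disjoint union.
\<close>

section \<open>Free reduction\<close>

definition cancel_cons :: "nat \<Rightarrow> nat list \<Rightarrow> nat list" where
  "cancel_cons x w = (case w of [] \<Rightarrow> [x] | y # ys \<Rightarrow> (if x = y then ys else x # y # ys))"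

lemma cancel_cons_simps [simp]:
  "cancel_cons x [] = [x]"
  "cancel_cons x (x # w) = w"
  "x \<noteq> y \<Longrightarrow> cancel_cons x (y # w) = x # y # w"
  by (simp_all add: cancel_cons_def)

lemma red_Cons: "red (x # xs) = cancel_cons x (red xs)"
  by (simp add: cancel_cons_def)

declare red.simps(2)[simp del]

lemma distinct_adj_cancel_cons: "distinct_adj w \<Longrightarrow> distinct_adj (cancel_cons x w)"
  by (cases w rule: remdups_adj.cases) (auto simp: cancel_cons_def)

lemma distinct_adj_red: "distinct_adj (red w)"
  by (induction w) (auto simp: red_Cons distinct_adj_cancel_cons)

lemma red_distinct_adj: "distinct_adj w \<Longrightarrow> red w = w"
proof (induction w)
  case (Cons x xs)
  then have "red xs = xs" by (metis distinct_adj_ConsD)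
  with Cons.prems show ?case by (cases xs) (auto simp: red_Cons)
qed simp

lemma red_idem [simp]: "red (red w) = red w"
  by (simp add: red_distinct_adj distinct_adj_red)

lemma cancel_cons_cancel_cons: "distinct_adj w \<Longrightarrow> cancel_cons x (cancel_cons x w) = w"
  by (cases w rule: remdups_adj.cases) (auto simp: cancel_cons_def)

lemma set_red: "set (red w) \<subseteq> set w"
  by (induction w) (auto simp: red_Cons cancel_cons_def split: list.splits)

lemma red_append_red_right [simp]: "red (xs @ red ys) = red (xs @ ys)"
  by (induction xs) (auto simp: red_Cons)

lemma red_cancel_cons_append:
  assumes "distinct_adj w"
  shows "red (cancel_cons x w @ ys) = cancel_cons x (red (w @ ys))"
proof (cases w)
  case (Cons y ws)
  then show ?thesis
    by (cases "x = y") (simp_all add: red_Cons cancel_cons_cancel_cons distinct_adj_red)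
qed (simp add: red_Cons)

lemma red_append_red_left [simp]: "red (red xs @ ys) = red (xs @ ys)"
  by (induction xs) (simp_all add: red_Cons red_cancel_cons_append distinct_adj_red)

lemma red_append_red_mid [simp]: "red (u @ red x @ w) = red (u @ x @ w)"
  by (metis red_append_red_left red_append_red_right)

lemma red_cancel_pair: "red (u @ x # x # w) = red (u @ w)"
  by (induction u) (simp_all add: red_Cons cancel_cons_cancel_cons distinct_adj_red)

lemma red_cancel_word: "red (u @ v @ rev v @ w) = red (u @ w)"
proof (induction v arbitrary: u w)
  case (Cons x v)
  have "red (u @ (x # v) @ rev (x # v) @ w) = red ((u @ [x]) @ v @ rev v @ x # w)" by simp
  also have "\<dots> = red (u @ x # x # w)" using Cons.IH[of "u @ [x]" "x # w"] by simp
  finally show ?case by (simp add: red_cancel_pair)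
qed simp

lemma red_cancel_rev_word: "red (u @ rev v @ v @ w) = red (u @ w)"
  using red_cancel_word[of u "rev v" w] by simp

lemma red_append_rev [simp]: "red (v @ rev v) = []"
  using red_cancel_word[of "[]" v "[]"] by simp

lemma red_rev_append [simp]: "red (rev v @ v) = []"
  using red_append_rev[of "rev v"] by simp

lemma red_map_red [simp]: "red (map f (red x)) = red (map f x)"
proof (induction x)
  case (Cons x xs)
  have "red (map f (red (x # xs))) = red (f x # map f (red xs))"
  proof (cases "red xs")
    case (Cons y ys)
    then show ?thesis
      by (cases "x = y") (simp_all add: red_Cons cancel_cons_cancel_cons distinct_adj_red)
  qed (simp add: red_Cons)
  also have "\<dots> = red (f x # map f xs)"
    using red_append_red_right[of "[f x]"] Cons.IH by (metis append_Cons append_Nil)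
  finally show ?case by simp
qed simp

lemma red_rev_red [simp]: "red (rev (red x)) = red (rev x)"
proof (induction x)
  case (Cons x xs)
  have "red (rev (red (x # xs))) = red (rev (red xs) @ [x])"
  proof (cases "red xs")
    case (Cons y ys)
    then show ?thesis
      using red_cancel_pair[of "rev ys" x "[]"] by (cases "x = y") (simp_all add: red_Cons)
  qed (simp add: red_Cons[of x xs])
  also have "\<dots> = red (rev xs @ [x])"
    by (metis Cons.IH red_append_red_left)
  finally show ?case by simp
qed simp

lemma red_append_rev_red [simp]: "red (u @ rev (red x)) = red (u @ rev x)"
  by (metis red_append_red_right red_rev_red)

lemma gmul_ginv_gw: "gmul (ginv (gw a)) (gw b) = red (rev a @ b)"
  by (simp add: gmul_def ginv_def gw_def)

lemma gmul_gw_ginv: "gmul (gw b) (ginv (gw a)) = red (b @ rev a)"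
  by (simp add: gmul_def ginv_def gw_def)

section \<open>Normal subgroups of the group of reduced words\<close>

lemma carrier_Z2F: "x \<in> carrier (Z2F S) \<longleftrightarrow> set x \<subseteq> S \<and> red x = x"
  by (simp add: Z2F_def)

lemma mult_Z2F [simp]: "x \<otimes>\<^bsub>Z2F S\<^esub> y = red (x @ y)"
  and one_Z2F [simp]: "\<one>\<^bsub>Z2F S\<^esub> = []"
  by (simp_all add: Z2F_def)

lemma red_in_carrier_Z2F: "set x \<subseteq> S \<Longrightarrow> red x \<in> carrier (Z2F S)"
  using set_red[of x] by (auto simp: carrier_Z2F)

lemma group_Z2F: "group (Z2F S)"
proof (rule groupI)
  fix x assume "x \<in> carrier (Z2F S)"
  then show "\<exists>y\<in>carrier (Z2F S). y \<otimes>\<^bsub>Z2F S\<^esub> x = \<one>\<^bsub>Z2F S\<^esub>"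
    by (intro bexI[of _ "red (rev x)"] red_in_carrier_Z2F) (auto simp: carrier_Z2F)
qed (use set_red in \<open>fastforce simp: carrier_Z2F\<close>)+

lemma inv_Z2F: "x \<in> carrier (Z2F S) \<Longrightarrow> inv\<^bsub>Z2F S\<^esub> x = red (rev x)"
  by (rule group.inv_equality[OF group_Z2F]) (use set_red in \<open>fastforce simp: carrier_Z2F\<close>)+

lemma normal_Z2F_iff:
  "N \<lhd> Z2F S \<longleftrightarrow> N \<subseteq> carrier (Z2F S) \<and> [] \<in> N \<and>
    (\<forall>x\<in>N. \<forall>y\<in>N. red (x @ y) \<in> N) \<and> (\<forall>x\<in>N. red (rev x) \<in> N) \<and>
    (\<forall>x\<in>carrier (Z2F S). \<forall>h\<in>N. red (x @ h @ rev x) \<in> N)"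
proof -
  have "subgroup N (Z2F S) \<longleftrightarrow> N \<subseteq> carrier (Z2F S) \<and> [] \<in> N \<and>
      (\<forall>x\<in>N. \<forall>y\<in>N. red (x @ y) \<in> N) \<and> (\<forall>x\<in>N. red (rev x) \<in> N)"
    using inv_Z2F by (auto simp: subgroup_def) (metis subsetD)+
  moreover have "x \<otimes>\<^bsub>Z2F S\<^esub> h \<otimes>\<^bsub>Z2F S\<^esub> inv\<^bsub>Z2F S\<^esub> x = red (x @ h @ rev x)"
    if "x \<in> carrier (Z2F S)" for x h
    using that by (simp add: inv_Z2F)
  ultimately show ?thesis
    unfolding group.normal_inv_iff[OF group_Z2F] by auto
qed

context
  fixes N S assumes N: "N \<lhd> Z2F S"
begin

lemma normal_Z2F_one: "[] \<in> N"
  using N by (simp add: normal_Z2F_iff)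

lemma normal_Z2F_mult: "x \<in> N \<Longrightarrow> y \<in> N \<Longrightarrow> red (x @ y) \<in> N"
  using N by (simp add: normal_Z2F_iff)

lemma normal_Z2F_inv: "x \<in> N \<Longrightarrow> red (rev x) \<in> N"
  using N by (simp add: normal_Z2F_iff)

lemma normal_Z2F_conj:
  assumes "h \<in> N" and "set v \<subseteq> S"
  shows "red (v @ h @ rev v) \<in> N"
proof -
  have "red (red v @ h @ rev (red v)) \<in> N"
    using N assms by (simp add: normal_Z2F_iff red_in_carrier_Z2F del: red_append_red_left)
  then show ?thesis by (metis append_assoc red_append_red_left red_append_rev_red)
qed

text \<open>Conjugation by \<open>b\<close> moves \<open>g\<^sub>a\<^sup>-\<^sup>1 g\<^sub>b\<close> to \<open>g\<^sub>b g\<^sub>a\<^sup>-\<^sup>1\<close>.\<close>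
lemma normal_Z2F_swap:
  assumes "set a \<subseteq> S" and "set b \<subseteq> S"
  shows "red (rev a @ b) \<in> N \<longleftrightarrow> red (b @ rev a) \<in> N"
proof
  assume "red (rev a @ b) \<in> N"
  from normal_Z2F_conj[OF this \<open>set b \<subseteq> S\<close>] show "red (b @ rev a) \<in> N"
    using red_cancel_word[of "b @ rev a" b "[]"] by simp
next
  assume "red (b @ rev a) \<in> N"
  from normal_Z2F_conj[OF this, of "rev a"] show "red (rev a @ b) \<in> N"
    using assms red_cancel_rev_word[of "rev a @ b" a "[]"] by simp
qed

end

section \<open>Gluing graphs\<close>

lemma V_pair [simp]: "V (A, D) = A" and E_pair [simp]: "E (A, D) = D"
  by (simp_all add: V_def E_def)

lemma graph_eq_pair: "K = (V K, E K)"
  by (simp add: V_def E_def)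

lemma inlv_inrv_simps [simp]:
  "inlv v \<noteq> inrv w" "inrv w \<noteq> inlv v"
  "inlv v = inlv v' \<longleftrightarrow> v = v'" "inrv w = inrv w' \<longleftrightarrow> w = w'"
  by (simp_all add: inlv_def inrv_def) presburger+

lemma V_dunion: "V (dunion K H) = inlv ` V K \<union> inrv ` V H"
  and E_dunion: "E (dunion K H) = image inlv ` E K \<union> image inrv ` E H"
  by (simp_all add: dunion_def)

lemma wf_graph_image:
  assumes "wf_graph K"
  shows "wf_graph (g ` V K, image g ` E K)"
  unfolding wf_graph_def
proof (rule conjI[OF _ ballI])
  show "finite (V (g ` V K, image g ` E K))"
    using assms by (simp add: wf_graph_def)
  fix e' assume "e' \<in> E (g ` V K, image g ` E K)"
  then obtain e where e: "e \<in> E K" "e' = g ` e" by auto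
  with assms have "e \<subseteq> V K" "e \<noteq> {}" "card e \<le> 2" "finite e"
    by (auto simp: wf_graph_def intro: finite_subset)
  with e show "e' \<subseteq> V (g ` V K, image g ` E K) \<and> e' \<noteq> {} \<and> card e' \<le> 2"
    using card_image_le[of e g] by auto
qed

lemma wf_graph_Un: "wf_graph (A, D) \<Longrightarrow> wf_graph (B, D') \<Longrightarrow> wf_graph (A \<union> B, D \<union> D')"
  by (auto simp: wf_graph_def)

lemma wf_gquot: "wf_graph K \<Longrightarrow> wf_graph (gquot R K)"
  unfolding gquot_def by (rule wf_graph_image)

lemma wf_dunion: "wf_graph K \<Longrightarrow> wf_graph H \<Longrightarrow> wf_graph (dunion K H)"
  unfolding dunion_def by (intro wf_graph_Un wf_graph_image)

lemma wf_glue: "wf_graph K \<Longrightarrow> wf_graph H \<Longrightarrow> wf_graph (glue K H f)"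
  by (simp add: glue_def wf_gquot wf_dunion)

lemma glK_in_V: "v \<in> V K \<Longrightarrow> glK K H f v \<in> V (glue K H f)"
  and glH_in_V: "w \<in> V H \<Longrightarrow> glH K H f w \<in> V (glue K H f)"
  by (simp_all add: glK_def glH_def glue_def gquot_def dunion_def)

lemma equiv_eqcl: "P \<subseteq> S \<times> S \<Longrightarrow> equiv S (eqcl S P)"
  unfolding eqcl_def
proof (rule equivI)
  assume "P \<subseteq> S \<times> S"
  then show "(Id_on S \<union> P \<union> P\<inverse>)\<^sup>+ \<subseteq> S \<times> S"
    by (intro trancl_subset_Sigma) auto
  then show "refl_on S ((Id_on S \<union> P \<union> P\<inverse>)\<^sup>+)"
    by (auto simp: refl_on_def)
  show "sym ((Id_on S \<union> P \<union> P\<inverse>)\<^sup>+)"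
    by (rule sym_trancl) (auto simp: sym_def)
qed (rule trans_trancl)

text \<open>\<open>qmap\<close> picks the least element of a block, which only exists for finite \<open>S\<close>.\<close>
lemma qmap_related:
  assumes R: "equiv S R" and "finite S" and "u \<in> S"
  shows "(u, qmap R u) \<in> R"
proof -
  have "R `` {u} \<subseteq> S" using R by (auto simp: equiv_def refl_on_def)
  with assms have "finite (R `` {u})" "u \<in> R `` {u}"
    by (auto intro: finite_subset simp: equiv_def refl_on_def)
  then show ?thesis
    unfolding qmap_def using Min_in by blast
qed

lemma qmap_eq: "equiv S R \<Longrightarrow> (u, u') \<in> R \<Longrightarrow> qmap R u = qmap R u'"
  unfolding qmap_def by (metis equiv_class_eq)

lemma glue_rel_equiv: "f \<subseteq> V K \<times> V H \<Longrightarrow> equiv (V (dunion K H)) (glue_rel K H f)"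
  unfolding glue_rel_def by (rule equiv_eqcl) (auto simp: V_dunion)

lemma glK_eq_glH:
  assumes "f \<subseteq> V K \<times> V H" and "(v, w) \<in> f"
  shows "glK K H f v = glH K H f w"
proof -
  have "(inlv v, inrv w) \<in> glue_rel K H f"
    using assms(2) unfolding glue_rel_def eqcl_def by (intro r_into_trancl) auto
  then show ?thesis
    unfolding glK_def glH_def comp_def by (rule qmap_eq[OF glue_rel_equiv[OF assms(1)]])
qed

lemma gquot_iso:
  assumes K: "wf_graph K" and R: "equiv (V K) R"
    and ker: "\<And>u u'. u \<in> V K \<Longrightarrow> u' \<in> V K \<Longrightarrow> \<theta> u = \<theta> u' \<longleftrightarrow> (u, u') \<in> R"
  shows "graph_iso \<theta> (gquot R K) (\<theta> ` V K, image \<theta> ` E K)"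
    and "u \<in> V K \<Longrightarrow> \<theta> (qmap R u) = \<theta> u"
proof -
  have fin: "finite (V K)" using K by (simp add: wf_graph_def)
  have qmap_in: "qmap R u \<in> V K" if "u \<in> V K" for u
    using qmap_related[OF R fin that] R by (auto simp: equiv_def refl_on_def)
  show \<theta>q: "\<theta> (qmap R u) = \<theta> u" if "u \<in> V K" for u
    using ker[OF qmap_in that] qmap_related[OF R fin that] R that
    by (metis equiv_def symD)
  have "inj_on \<theta> (qmap R ` V K)"
  proof (rule inj_onI)
    fix x y assume "x \<in> qmap R ` V K" "y \<in> qmap R ` V K" "\<theta> x = \<theta> y"
    then obtain u u' where "u \<in> V K" "u' \<in> V K" "x = qmap R u" "y = qmap R u'" "\<theta> u = \<theta> u'"
      using \<theta>q by auto
    then show "x = y" using ker qmap_eq[OF R] by blast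
  qed
  moreover have "\<theta> ` qmap R ` V K = \<theta> ` V K"
    unfolding image_image by (rule image_cong[OF refl \<theta>q])
  moreover have "\<theta> ` qmap R ` e = \<theta> ` e" if "e \<in> E K" for e
  proof -
    have "e \<subseteq> V K" using K that by (auto simp: wf_graph_def)
    with \<theta>q show ?thesis unfolding image_image by (intro image_cong) auto
  qed
  then have "image \<theta> ` image (qmap R) ` E K = image \<theta> ` E K"
    unfolding image_image by (rule image_cong[OF refl])
  ultimately show "graph_iso \<theta> (gquot R K) (\<theta> ` V K, image \<theta> ` E K)"
    by (simp add: graph_iso_def gquot_def bij_betw_def)
qed

lemma glue_rel_kernel:
  assumes f: "f \<subseteq> V K \<times> V H" and \<alpha>: "inj_on \<alpha> (V K)" and \<beta>: "inj_on \<beta> (V H)"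
    and \<alpha>\<beta>: "\<And>v w. v \<in> V K \<Longrightarrow> w \<in> V H \<Longrightarrow> \<alpha> v = \<beta> w \<longleftrightarrow> (v, w) \<in> f"
    and \<theta>: "\<And>v. \<theta> (inlv v) = \<alpha> v" "\<And>w. \<theta> (inrv w) = \<beta> w"
    and u: "u \<in> V (dunion K H)" "u' \<in> V (dunion K H)"
  shows "\<theta> u = \<theta> u' \<longleftrightarrow> (u, u') \<in> glue_rel K H f"
proof -
  define P where "P = (\<lambda>(v, w). (inlv v, inrv w)) ` f"
  have rel: "glue_rel K H f = (Id_on (V (dunion K H)) \<union> P \<union> P\<inverse>)\<^sup>+"
    by (simp add: glue_rel_def eqcl_def P_def)
  have sound: "\<theta> x = \<theta> y" if "(x, y) \<in> Id_on (V (dunion K H)) \<union> P \<union> P\<inverse>" for x y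
    using that f \<alpha>\<beta> by (auto simp: P_def \<theta>) (metis mem_Sigma_iff subsetD)
  have gen: "(u, u') \<in> Id_on (V (dunion K H)) \<union> P \<union> P\<inverse>" if eq: "\<theta> u = \<theta> u'"
  proof -
    consider v v' where "v \<in> V K" "v' \<in> V K" "u = inlv v" "u' = inlv v'"
      | v w' where "v \<in> V K" "w' \<in> V H" "u = inlv v" "u' = inrv w'"
      | w v' where "w \<in> V H" "v' \<in> V K" "u = inrv w" "u' = inlv v'"
      | w w' where "w \<in> V H" "w' \<in> V H" "u = inrv w" "u' = inrv w'"
      using u unfolding V_dunion by blast
    then show ?thesis
    proof cases
      case 1
      with eq \<alpha> u show ?thesis by (auto simp: \<theta> inj_on_def)
    next
      case 2
      with eq \<alpha>\<beta> have "(v, w') \<in> f" by (simp add: \<theta>)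
      with 2 show ?thesis by (auto simp: P_def)
    next
      case 3
      with eq have "\<alpha> v' = \<beta> w" by (simp add: \<theta>)
      with 3 \<alpha>\<beta> have "(v', w) \<in> f" by blast
      with 3 show ?thesis by (auto simp: P_def)
    next
      case 4
      with eq \<beta> u show ?thesis by (auto simp: \<theta> inj_on_def)
    qed
  qed
  have "\<theta> u = \<theta> u'" if "(u, u') \<in> glue_rel K H f"
    using that unfolding rel by (induction rule: trancl_induct) (metis sound)+
  with gen show ?thesis
    unfolding rel by blast
qed

lemma glue_iso:
  assumes K: "wf_graph K" and H: "wf_graph H" and f: "f \<subseteq> V K \<times> V H"
    and \<alpha>: "inj_on \<alpha> (V K)" and \<beta>: "inj_on \<beta> (V H)"
    and \<alpha>\<beta>: "\<And>v w. v \<in> V K \<Longrightarrow> w \<in> V H \<Longrightarrow> \<alpha> v = \<beta> w \<longleftrightarrow> (v, w) \<in> f"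
    and VG: "V G = \<alpha> ` V K \<union> \<beta> ` V H"
    and EG: "E G = image \<alpha> ` E K \<union> image \<beta> ` E H"
  obtains \<phi> where "graph_iso \<phi> (glue K H f) G"
    and "\<And>v. v \<in> V K \<Longrightarrow> \<phi> (glK K H f v) = \<alpha> v"
    and "\<And>w. w \<in> V H \<Longrightarrow> \<phi> (glH K H f w) = \<beta> w"
proof
  define \<theta> where "\<theta> n = (if even n then \<alpha> (n div 2) else \<beta> (n div 2))" for n
  have \<theta>l: "\<theta> (inlv v) = \<alpha> v" and \<theta>r: "\<theta> (inrv w) = \<beta> w" for v w
    by (simp_all add: \<theta>_def inlv_def inrv_def)
  note ker = glue_rel_kernel[OF f \<alpha> \<beta> \<alpha>\<beta> \<theta>l \<theta>r]
  note iso = gquot_iso[OF wf_dunion[OF K H] glue_rel_equiv[OF f] ker]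
  have "(\<theta> ` V (dunion K H), image \<theta> ` E (dunion K H)) = G"
    by (subst graph_eq_pair[of G])
      (simp add: VG EG V_dunion E_dunion image_Un image_image \<theta>l \<theta>r)
  with iso(1) show "graph_iso \<theta> (glue K H f) G"
    by (simp add: glue_def)
  show "\<theta> (glK K H f v) = \<alpha> v" if "v \<in> V K" for v
    using iso(2)[of "inlv v"] that by (simp add: glK_def V_dunion \<theta>l)
  show "\<theta> (glH K H f w) = \<beta> w" if "w \<in> V H" for w
    using iso(2)[of "inrv w"] that by (simp add: glH_def V_dunion \<theta>r)
qed

lemma vertex_overlapI:
  assumes f: "f \<subseteq> V K \<times> V H" and \<alpha>: "inj_on \<alpha> (V K)" and \<beta>: "inj_on \<beta> (V H)"
    and \<alpha>\<beta>: "\<And>v w. v \<in> V K \<Longrightarrow> w \<in> V H \<Longrightarrow> \<alpha> v = \<beta> w \<longleftrightarrow> (v, w) \<in> f"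
  shows "vertex_overlap K H f"
  unfolding vertex_overlap_def
proof (intro conjI f ballI, clarify)
  fix v w v' w' assume "(v, w) \<in> f" "(v', w') \<in> f"
  with f \<alpha>\<beta> have "\<alpha> v = \<beta> w" "\<alpha> v' = \<beta> w'" "v \<in> V K" "v' \<in> V K" "w \<in> V H" "w' \<in> V H"
    by auto
  with \<alpha> \<beta> show "v = v' \<longleftrightarrow> w = w'"
    by (metis inj_onD)
qed

lemma vertex_overlap_same_ker:
  assumes "same_ker b c" and "set b \<subseteq> V K" and "set c \<subseteq> V H"
  shows "vertex_overlap K H {(b ! i, c ! i) | i. i < length b}"
  using assms by (auto simp: vertex_overlap_def same_ker_def)

lemma map_glK_eq_map_glH:
  assumes len: "length b = length c" and "set b \<subseteq> V K" and "set c \<subseteq> V H"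
  defines "P \<equiv> {(b ! i, c ! i) | i. i < length b}"
  shows "map (glK K H P) b = map (glH K H P) c"
proof (rule nth_equalityI)
  have P: "P \<subseteq> V K \<times> V H"
    using assms by (auto simp: P_def)
  fix i assume "i < length (map (glK K H P) b)"
  moreover from this have "(b ! i, c ! i) \<in> P"
    by (auto simp: P_def)
  ultimately show "map (glK K H P) b ! i = map (glH K H P) c ! i"
    using glK_eq_glH[OF P] len by simp
qed (simp add: len)

section \<open>Skew graph categories\<close>

lemma V_M [simp]: "V M = {0}" and E_M [simp]: "E M = {}"
  by (simp_all add: M_def)

lemma mem_F_of: "(K, g) \<in> F_of C \<longleftrightarrow> (\<exists>a b. (K, a, b) \<in> C \<and> g = red (rev a @ b))"
  unfolding F_of_def gmul_ginv_gw by blast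

lemma mem_C_of: "(K, a, b) \<in> C_of F \<longleftrightarrow> wf_bgraph (K, a, b) \<and> (K, red (rev a @ b)) \<in> F"
  by (simp add: C_of_def gmul_ginv_gw)

lemma gfam_rep_iso: "gfam_rep F \<Longrightarrow> (K, g) \<in> F \<Longrightarrow> graph_iso \<phi> K K' \<Longrightarrow> (K', gmap \<phi> g) \<in> F"
  unfolding gfam_rep_def by blast

lemma gfam_rep_wf: "gfam_rep F \<Longrightarrow> (K, g) \<in> F \<Longrightarrow> wf_graph K \<and> set g \<subseteq> V K \<and> red g = g"
  unfolding gfam_rep_def carrier_Z2F by fast

lemma graph_iso_inv_into:
  assumes iso: "graph_iso \<phi> K K" and K: "wf_graph K"
  shows "graph_iso (inv_into (V K) \<phi>) K K"
proof -
  have bij: "bij_betw \<phi> (V K) (V K)" and E: "image \<phi> ` E K = E K"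
    using iso by (auto simp: graph_iso_def)
  have "inv_into (V K) \<phi> ` \<phi> ` e = e" if "e \<in> E K" for e
    using K that bij by (auto simp: wf_graph_def bij_betw_def inv_into_image_cancel)
  then have "image (inv_into (V K) \<phi>) ` image \<phi> ` E K = E K"
    by (simp add: image_image)
  with E bij show ?thesis
    by (simp add: graph_iso_def bij_betw_inv_into)
qed

lemma gfam_rep_automorphism:
  assumes rep: "gfam_rep F" and K: "wf_graph K" and iso: "graph_iso \<phi> K K"
  shows "gmap \<phi> ` Fib F K = Fib F K"
proof
  show "gmap \<phi> ` Fib F K \<subseteq> Fib F K"
    using gfam_rep_iso[OF rep _ iso] by (auto simp: Fib_def)
  show "Fib F K \<subseteq> gmap \<phi> ` Fib F K"
  proof
    fix g assume "g \<in> Fib F K"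
    then have g: "(K, g) \<in> F" by (simp add: Fib_def)
    define \<psi> where "\<psi> = inv_into (V K) \<phi>"
    have "(K, gmap \<psi> g) \<in> F"
      using gfam_rep_iso[OF rep g graph_iso_inv_into[OF iso K]] by (simp add: \<psi>_def)
    moreover have "gmap \<phi> (gmap \<psi> g) = g"
    proof -
      have "\<phi> (\<psi> v) = v" if "v \<in> V K" for v
        using iso that by (simp add: \<psi>_def graph_iso_def bij_betw_def f_inv_into_f)
      then have "map (\<phi> \<circ> \<psi>) g = g"
        using gfam_rep_wf[OF rep g] by (intro map_idI) auto
      then show ?thesis
        using gfam_rep_wf[OF rep g] by (simp add: gmap_def)
    qed
    ultimately show "g \<in> gmap \<phi> ` Fib F K"
      by (force simp: Fib_def)
  qed
qed

context
  fixes C assumes skew: "skew_graph_category C"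
begin

lemma skew_bset_rep: "bset_rep C"
  using skew by (simp add: skew_graph_category_def)

lemma skew_wf: "(K, a, b) \<in> C \<Longrightarrow> wf_graph K \<and> set a \<subseteq> V K \<and> set b \<subseteq> V K"
  using skew_bset_rep unfolding bset_rep_def by (metis wf_bgraph.simps)

lemma skew_iso_closed: "X \<in> C \<Longrightarrow> bgraph_iso \<phi> X Y \<Longrightarrow> Y \<in> C"
  using skew_bset_rep unfolding bset_rep_def by blast

lemma skew_N0: "(N0, [], []) \<in> C"
  and skew_M11: "(M, [0], [0]) \<in> C"
  and skew_M02: "(M, [], [0, 0]) \<in> C"
  using skew by (simp_all add: skew_graph_category_def bzero_def M11_def M02_def)

lemma skew_converse: "(K, a, b) \<in> C \<Longrightarrow> (K, b, a) \<in> C"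
  using skew binv.simps unfolding skew_graph_category_def by metis

lemma skew_funion:
  "(K, a, b) \<in> C \<Longrightarrow> (H, c, d) \<in> C \<Longrightarrow> vertex_overlap K H f \<Longrightarrow>
    bfunion (K, a, b) f (H, c, d) \<in> C"
  using skew unfolding skew_graph_category_def by blast

lemma skew_comp:
  "(K, a, b) \<in> C \<Longrightarrow> (H, c, d) \<in> C \<Longrightarrow> same_ker b c \<Longrightarrow>
    bcomp (H, c, d) (K, a, b) \<in> C"
  using skew unfolding skew_graph_category_def by blast

text \<open>The \<open>f\<close>-union may be computed in any model \<open>G\<close> of \<open>K \<union>\<^sub>f H\<close>, with embeddings \<open>\<alpha>, \<beta>\<close>.\<close>
lemma skew_union_iso:
  assumes X: "(K, a, b) \<in> C" and Y: "(H, c, d) \<in> C" and f: "f \<subseteq> V K \<times> V H"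
    and \<alpha>: "inj_on \<alpha> (V K)" and \<beta>: "inj_on \<beta> (V H)"
    and \<alpha>\<beta>: "\<And>v w. v \<in> V K \<Longrightarrow> w \<in> V H \<Longrightarrow> \<alpha> v = \<beta> w \<longleftrightarrow> (v, w) \<in> f"
    and VG: "V G = \<alpha> ` V K \<union> \<beta> ` V H"
    and EG: "E G = image \<alpha> ` E K \<union> image \<beta> ` E H"
  shows "(G, map \<alpha> a @ map \<beta> c, map \<alpha> b @ map \<beta> d) \<in> C"
proof -
  have wK: "wf_graph K" "set a \<subseteq> V K" "set b \<subseteq> V K"
    and wH: "wf_graph H" "set c \<subseteq> V H" "set d \<subseteq> V H"
    using skew_wf[OF X] skew_wf[OF Y] by auto
  have "bfunion (K, a, b) f (H, c, d) \<in> C"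
    using skew_funion[OF X Y vertex_overlapI[OF f \<alpha> \<beta> \<alpha>\<beta>]] .
  moreover obtain \<phi> where "graph_iso \<phi> (glue K H f) G"
    and "\<And>v. v \<in> V K \<Longrightarrow> \<phi> (glK K H f v) = \<alpha> v" and "\<And>w. w \<in> V H \<Longrightarrow> \<phi> (glH K H f w) = \<beta> w"
    using glue_iso[OF wK(1) wH(1) f \<alpha> \<beta> \<alpha>\<beta> VG EG] by blast
  with wK wH have
    "bgraph_iso \<phi> (bfunion (K, a, b) f (H, c, d)) (G, map \<alpha> a @ map \<beta> c, map \<alpha> b @ map \<beta> d)"
    by (auto intro!: map_cong)
  ultimately show ?thesis by (rule skew_iso_closed)
qed

lemma skew_comp_iso:
  assumes X: "(K, a, b) \<in> C" and Y: "(H, c, d) \<in> C" and ker: "same_ker b c"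
    and \<alpha>: "inj_on \<alpha> (V K)" and \<beta>: "inj_on \<beta> (V H)"
    and \<alpha>\<beta>: "\<And>v w. v \<in> V K \<Longrightarrow> w \<in> V H \<Longrightarrow>
      \<alpha> v = \<beta> w \<longleftrightarrow> (v, w) \<in> {(b ! i, c ! i) | i. i < length b}"
    and VG: "V G = \<alpha> ` V K \<union> \<beta> ` V H"
    and EG: "E G = image \<alpha> ` E K \<union> image \<beta> ` E H"
  shows "(G, map \<alpha> a, map \<beta> d) \<in> C"
proof -
  define P where "P = {(b ! i, c ! i) | i. i < length b}"
  have wK: "wf_graph K" "set a \<subseteq> V K" "set b \<subseteq> V K"
    and wH: "wf_graph H" "set c \<subseteq> V H" "set d \<subseteq> V H"
    using skew_wf[OF X] skew_wf[OF Y] by auto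
  have "length b = length c" using ker by (simp add: same_ker_def)
  with wK wH have P: "P \<subseteq> V K \<times> V H" by (auto simp: P_def)
  have "bcomp (H, c, d) (K, a, b) \<in> C"
    using skew_comp[OF X Y ker] .
  moreover obtain \<phi> where "graph_iso \<phi> (glue K H P) G"
    and "\<And>v. v \<in> V K \<Longrightarrow> \<phi> (glK K H P v) = \<alpha> v" and "\<And>w. w \<in> V H \<Longrightarrow> \<phi> (glH K H P w) = \<beta> w"
    using glue_iso[OF wK(1) wH(1) P \<alpha> \<beta> _ VG EG] \<alpha>\<beta> unfolding P_def by blast
  with wK wH have "bgraph_iso \<phi> (bcomp (H, c, d) (K, a, b)) (G, map \<alpha> a, map \<beta> d)"
    by (auto simp: P_def[symmetric] Let_def intro!: map_cong)
  ultimately show ?thesis by (rule skew_iso_closed)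
qed

lemma skew_attach_vertex:
  assumes X: "(M, p, q) \<in> C" and Y: "(K, a, b) \<in> C"
  shows "((insert x (V K), E K), map (\<lambda>_. x) p @ a, map (\<lambda>_. x) q @ b) \<in> C"
proof -
  define f where "f = (if x \<in> V K then {(0::nat, x)} else {})"
  have "((insert x (V K), E K), map (\<lambda>_. x) p @ map id a, map (\<lambda>_. x) q @ map id b) \<in> C"
    by (rule skew_union_iso[OF X Y, of f]) (auto simp: f_def)
  then show ?thesis by simp
qed

lemma skew_identity: "((set w, {}), w, w) \<in> C"
proof (induction w)
  case Nil
  show ?case using skew_N0 by (simp add: N0_def)
next
  case (Cons x w)
  from skew_attach_vertex[OF skew_M11 this, of x] show ?case by simp
qed

lemma skew_cup: "((set (x # x # a), {}), a, x # x # a) \<in> C"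
  using skew_attach_vertex[OF skew_M02 skew_identity, of x a] by simp

lemma skew_add_through: "(K, a, b) \<in> C \<Longrightarrow> x \<in> V K \<Longrightarrow> (K, x # a, x # b) \<in> C"
  using skew_attach_vertex[OF skew_M11, of K a b x] by (simp add: insert_absorb flip: graph_eq_pair)

lemma skew_add_pair: "(K, a, b) \<in> C \<Longrightarrow> x \<in> V K \<Longrightarrow> (K, a, x # x # b) \<in> C"
  using skew_attach_vertex[OF skew_M02, of K a b x] by (simp add: insert_absorb flip: graph_eq_pair)

lemma skew_comp_edgeless_left:
  assumes "((set l, {}), a, l) \<in> C" and "(K, l, d) \<in> C"
  shows "(K, a, d) \<in> C"
proof -
  have "set l \<subseteq> V K" using skew_wf[OF assms(2)] by simp
  then have "(K, map id a, map id d) \<in> C"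
    by (intro skew_comp_iso[OF assms]) (auto simp: same_ker_def in_set_conv_nth)
  then show ?thesis by simp
qed

lemma skew_comp_edgeless_right:
  assumes "(K, a, l) \<in> C" and "((set l, {}), l, d) \<in> C"
  shows "(K, a, d) \<in> C"
proof -
  have "set l \<subseteq> V K" using skew_wf[OF assms(1)] by simp
  then have "(K, map id a, map id d) \<in> C"
    by (intro skew_comp_iso[OF assms]) (auto simp: same_ker_def in_set_conv_nth)
  then show ?thesis by simp
qed

lemma skew_del_pair: "(K, a, x # x # b) \<in> C \<Longrightarrow> (K, a, b) \<in> C"
  by (erule skew_comp_edgeless_right) (rule skew_converse[OF skew_cup])

lemma skew_move_label: "(K, x # a, b) \<in> C \<longleftrightarrow> (K, a, x # b) \<in> C"
proof
  assume X: "(K, x # a, b) \<in> C"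
  then have "(K, x # x # a, x # b) \<in> C" using skew_wf[OF X] by (intro skew_add_through) auto
  with skew_cup show "(K, a, x # b) \<in> C" by (rule skew_comp_edgeless_left)
next
  assume X: "(K, a, x # b) \<in> C"
  then have "(K, x # a, x # x # b) \<in> C" using skew_wf[OF X] by (intro skew_add_through) auto
  then show "(K, x # a, b) \<in> C" by (rule skew_del_pair)
qed

lemma skew_bend: "(K, a, b) \<in> C \<longleftrightarrow> (K, [], rev a @ b) \<in> C"
proof (induction a arbitrary: b)
  case (Cons x a)
  then show ?case by (simp add: skew_move_label)
qed simp

lemma skew_cancel_pair:
  assumes "x \<in> V K"
  shows "(K, [], u @ x # x # v) \<in> C \<longleftrightarrow> (K, [], u @ v) \<in> C"
proof -
  have "(K, rev u, x # x # v) \<in> C \<longleftrightarrow> (K, rev u, v) \<in> C"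
    using skew_add_pair[OF _ assms] skew_del_pair by blast
  then show ?thesis
    using skew_bend[of K "rev u" v] skew_bend[of K "rev u" "x # x # v"] by simp
qed

lemma skew_red_iff: "set w \<subseteq> V K \<Longrightarrow> (K, [], u @ red w) \<in> C \<longleftrightarrow> (K, [], u @ w) \<in> C"
proof (induction w arbitrary: u)
  case (Cons x w)
  have "(K, [], u @ red (x # w)) \<in> C \<longleftrightarrow> (K, [], (u @ [x]) @ red w) \<in> C"
  proof (cases "red w")
    case (Cons y ys)
    with \<open>set (x # w) \<subseteq> V K\<close> show ?thesis
      by (cases "x = y") (simp_all add: red_Cons skew_cancel_pair)
  qed (simp add: red_Cons)
  also have "\<dots> \<longleftrightarrow> (K, [], u @ x # w) \<in> C"
    using Cons.IH[of "u @ [x]"] Cons.prems by simp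
  finally show ?case .
qed simp

lemma skew_append:
  assumes X: "(K, [], a) \<in> C" and Y: "(K, [], b) \<in> C"
  shows "(K, [], a @ b) \<in> C"
proof -
  have "(K, map id [] @ map id [], map id a @ map id b) \<in> C"
    by (rule skew_union_iso[OF X Y, of "Id_on (V K)" id id]) auto
  then show ?thesis by simp
qed

lemma skew_conj:
  assumes X: "(K, [], h) \<in> C" and v: "set v \<subseteq> V K"
  shows "(K, [], v @ h @ rev v) \<in> C"
proof -
  have "(K, map id [] @ map id (rev v), map id h @ map id (rev v)) \<in> C"
    by (rule skew_union_iso[OF X skew_identity[of "rev v"], where f = "Id_on (set v)"
          and \<alpha> = id and \<beta> = id]) (use v in auto)
  then show ?thesis
    using skew_bend[of K "rev v" "h @ rev v"] by simp
qed

lemma skew_rev: "(K, [], h) \<in> C \<Longrightarrow> (K, [], rev h) \<in> C"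
  using skew_bend[of K h "[]"] skew_converse[of K "[]" h] by simp

lemma skew_red: "set w \<subseteq> V K \<Longrightarrow> (K, [], red w) \<in> C \<longleftrightarrow> (K, [], w) \<in> C"
  using skew_red_iff[of w K "[]"] by simp

lemma skew_compose_same:
  assumes X: "(G, a, b) \<in> C" and Y: "(G, b, d) \<in> C"
  shows "(G, a, d) \<in> C"
proof -
  have "(G, [], rev a @ b @ rev b @ d) \<in> C"
    using skew_append[OF skew_bend[THEN iffD1, OF X] skew_bend[THEN iffD1, OF Y]] by simp
  moreover have "set (rev a @ b @ rev b @ d) \<subseteq> V G"
    using skew_wf[OF X] skew_wf[OF Y] by auto
  ultimately have "(G, [], red (rev a @ d)) \<in> C"
    using skew_red by (simp flip: red_cancel_word[of "rev a" b d])
  moreover have "set (rev a @ d) \<subseteq> V G"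
    using skew_wf[OF X] skew_wf[OF Y] by auto
  ultimately show ?thesis
    by (simp add: skew_red skew_bend[of G a d])
qed

lemma skew_empty_labels:
  assumes X: "(K, a, b) \<in> C"
  shows "(K, [], []) \<in> C"
proof -
  have "(K, a, a) \<in> C"
    by (rule skew_compose_same[OF X skew_converse[OF X]])
  then have "(K, [], rev a @ a) \<in> C"
    by (rule skew_bend[THEN iffD1])
  moreover have "set (rev a @ a) \<subseteq> V K"
    using skew_wf[OF X] by auto
  ultimately show ?thesis
    using skew_red[of "rev a @ a" K] by simp
qed

lemma mem_F_of_skew: "(K, g) \<in> F_of C \<longleftrightarrow> (\<exists>w. (K, [], w) \<in> C \<and> g = red w)"
  unfolding mem_F_of by (metis append_Nil rev.simps(1) skew_bend)

lemma Fib_F_of: "Fib (F_of C) K = {w. (K, [], w) \<in> C \<and> red w = w}"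
proof -
  have "(K, [], red w) \<in> C" if "(K, [], w) \<in> C" for w
    using skew_red skew_wf[OF that] that by simp
  then show ?thesis
    unfolding Fib_def mem_F_of_skew by auto
qed

lemma F_of_empty_inputs: "F_of C = {(K, gw a) | K a. (K, [], a) \<in> C}"
  by (auto simp: mem_F_of_skew gw_def)

lemma skew_tensor:
  assumes "(K, a, b) \<in> C" and "(H, c, d) \<in> C"
  shows "btensor (K, a, b) (H, c, d) \<in> C"
  using skew_union_iso[OF assms, of "{}" inlv inrv "dunion K H"]
  by (simp add: V_dunion E_dunion inj_on_def)

lemma skew_bcomp_if_quotient_closed:
  assumes quot: "\<And>K a b R. (K, a, b) \<in> C \<Longrightarrow> equiv (V K) R \<Longrightarrow> bquot R (K, a, b) \<in> C"
    and X: "(K, a, b) \<in> C" and Y: "(H, c, d) \<in> C" and len: "length b = length c"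
  shows "bcomp (H, c, d) (K, a, b) \<in> C"
proof -
  define P where "P = {(b ! i, c ! i) | i. i < length b}"
  define R where "R = glue_rel K H P"
  have P: "P \<subseteq> V K \<times> V H"
    using skew_wf[OF X] skew_wf[OF Y] len by (auto simp: P_def)
  then have R: "equiv (V (dunion K H)) R"
    by (simp add: R_def glue_rel_equiv)
  have bc: "map (glK K H P) b = map (glH K H P) c"
    unfolding P_def using skew_wf[OF X] skew_wf[OF Y] by (intro map_glK_eq_map_glH[OF len]) auto
  have "(dunion K H, map inlv a, map inlv b) \<in> C"
    using skew_tensor[OF X skew_empty_labels[OF Y]] by simp
  from quot[OF this R] have "(glue K H P, map (glK K H P) a, map (glK K H P) b) \<in> C"
    by (simp add: glue_def glK_def R_def)
  moreover have "(dunion K H, map inrv c, map inrv d) \<in> C"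
    using skew_tensor[OF skew_empty_labels[OF X] Y] by simp
  from quot[OF this R] have "(glue K H P, map (glH K H P) c, map (glH K H P) d) \<in> C"
    by (simp add: glue_def glH_def R_def)
  ultimately show ?thesis
    using skew_compose_same bc by (simp add: P_def[symmetric])
qed

lemma graph_category_if_quotient_closed:
  assumes quot: "\<And>K a b R. (K, a, b) \<in> C \<Longrightarrow> equiv (V K) R \<Longrightarrow> bquot R (K, a, b) \<in> C"
  shows "graph_category C"
  unfolding graph_category_def
proof (intro conjI ballI impI)
  show "bset_rep C" "M11 \<in> C" "M02 \<in> C" "bzero \<in> C"
    using skew_bset_rep skew_M11 skew_M02 skew_N0 by (simp_all add: M11_def M02_def bzero_def)
  fix X Y assume "X \<in> C" "Y \<in> C"
  then show "btensor X Y \<in> C"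
    using skew_tensor by (cases X, cases Y) simp
  show "length (outputs X) = length (inputs Y) \<Longrightarrow> bcomp Y X \<in> C"
    using \<open>X \<in> C\<close> \<open>Y \<in> C\<close> skew_bcomp_if_quotient_closed[OF quot]
    by (cases X, cases Y) simp
next
  fix X assume "X \<in> C" then show "binv X \<in> C"
    using skew_converse by (cases X) simp
qed

lemma gfam_rep_F_of: "gfam_rep (F_of C)"
  unfolding gfam_rep_def
proof (intro conjI allI impI ballI)
  fix x assume "x \<in> F_of C"
  then obtain K w where "x = (K, red w)" "(K, [], w) \<in> C"
    by (auto simp: F_of_empty_inputs gw_def)
  then show "case x of (K, g) \<Rightarrow> wf_graph K \<and> g \<in> carrier (Z2F (V K))"
    using skew_wf by (simp add: red_in_carrier_Z2F)
next
  fix K K' \<phi> g assume "(K, g) \<in> F_of C" and iso: "graph_iso \<phi> K K'"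
  then obtain w where "(K, [], w) \<in> C" "g = red w"
    by (auto simp: mem_F_of_skew)
  moreover from this have "(K', [], map \<phi> w) \<in> C"
    using iso skew_iso_closed[of "(K, [], w)" \<phi> "(K', [], map \<phi> w)"] by simp
  ultimately show "(K', gmap \<phi> g) \<in> F_of C"
    by (auto simp: mem_F_of_skew gmap_def)
qed

lemma normal_Fib_F_of: "Fib (F_of C) K \<lhd> Z2F (V K)" if "(K, g) \<in> F_of C"
  unfolding normal_Z2F_iff Fib_F_of
proof (intro conjI ballI)
  have red_in: "red w \<in> {w. (K, [], w) \<in> C \<and> red w = w}" if "(K, [], w) \<in> C" for w
    using that skew_red skew_wf[OF that] by simp
  show "{w. (K, [], w) \<in> C \<and> red w = w} \<subseteq> carrier (Z2F (V K))"
    using skew_wf[of K "[]"] by (auto simp: carrier_Z2F)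
  show "[] \<in> {w. (K, [], w) \<in> C \<and> red w = w}"
    using \<open>(K, g) \<in> F_of C\<close> skew_empty_labels[of K "[]"] by (auto simp: mem_F_of_skew)
  fix x y assume x: "x \<in> {w. (K, [], w) \<in> C \<and> red w = w}"
  show "red (rev x) \<in> {w. (K, [], w) \<in> C \<and> red w = w}"
    by (intro red_in skew_rev) (use x in simp)
  show "red (x @ y) \<in> {w. (K, [], w) \<in> C \<and> red w = w}"
    if "y \<in> {w. (K, [], w) \<in> C \<and> red w = w}"
    by (intro red_in skew_append) (use x that in simp_all)
  show "red (y @ x @ rev y) \<in> {w. (K, [], w) \<in> C \<and> red w = w}"
    if "y \<in> carrier (Z2F (V K))"
    by (intro red_in skew_conj) (use x that in \<open>simp_all add: carrier_Z2F\<close>)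
qed

lemma graph_fibration_F_of: "graph_fibration (F_of C)"
  unfolding graph_fibration_def
proof (intro conjI allI impI)
  show "gfam_rep (F_of C)" by (rule gfam_rep_F_of)
  show "(N0, []) \<in> F_of C"
    using skew_N0 mem_F_of_skew[of N0 "[]"] by auto
  have "red [0, 0] = []" by (simp add: red_Cons)
  then show "(N1, []) \<in> F_of C"
    using skew_M02 mem_F_of_skew[of N1 "[]"] by (auto simp: M_def N1_def)
  show "Fib (F_of C) K = {} \<or> Fib (F_of C) K \<lhd> Z2F (V K)" for K
    using normal_Fib_F_of unfolding Fib_def by blast
  show "gmap \<phi> ` Fib (F_of C) K = Fib (F_of C) K" if "wf_graph K" "graph_iso \<phi> K K" for K \<phi>
    using gfam_rep_automorphism[OF gfam_rep_F_of that] .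
next
  fix K g H h f
  assume "(K, g) \<in> F_of C" "(H, h) \<in> F_of C" and f: "vertex_overlap K H f"
  then obtain v w where v: "(K, [], v) \<in> C" "g = red v" and w: "(H, [], w) \<in> C" "h = red w"
    by (auto simp: mem_F_of_skew)
  have "(glue K H f, [], map (glK K H f) v @ map (glH K H f) w) \<in> C"
    using skew_funion[OF v(1) w(1) f] by simp
  moreover have
    "gmul (gmap (glK K H f) g) (gmap (glH K H f) h) = red (map (glK K H f) v @ map (glH K H f) w)"
    by (simp add: v(2) w(2) gmul_def gmap_def)
  ultimately show "(glue K H f, gmul (gmap (glK K H f) g) (gmap (glH K H f) h)) \<in> F_of C"
    by (auto simp: mem_F_of_skew)
qed

lemma F_of_swapped: "F_of C = {(K, gmul (gw b) (ginv (gw a))) | K a b. (K, a, b) \<in> C}"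
proof -
  have swap: "(K, red (rev a @ b)) \<in> F_of C \<longleftrightarrow> (K, red (b @ rev a)) \<in> F_of C"
    if "(K, a, b) \<in> C" for K a b
  proof -
    have "(K, red (rev a @ b)) \<in> F_of C"
      using that by (auto simp: mem_F_of)
    from normal_Z2F_swap[OF normal_Fib_F_of[OF this]] show ?thesis
      using skew_wf[OF that] by (simp add: Fib_def)
  qed
  show ?thesis
  proof (intro equalityI subsetI)
    fix x assume x: "x \<in> F_of C"
    obtain K g where "x = (K, g)" by (cases x)
    with x obtain w where "x = (K, red w)" "(K, [], w) \<in> C"
      by (auto simp: mem_F_of_skew)
    moreover have "red w = gmul (gw w) (ginv (gw []))"
      by (simp add: gmul_gw_ginv)
    ultimately show "x \<in> {(K, gmul (gw b) (ginv (gw a))) | K a b. (K, a, b) \<in> C}"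
      by blast
  next
    fix x assume "x \<in> {(K, gmul (gw b) (ginv (gw a))) | K a b. (K, a, b) \<in> C}"
    then obtain K a b where "x = (K, red (b @ rev a))" and X: "(K, a, b) \<in> C"
      by (auto simp: gmul_gw_ginv)
    moreover have "(K, red (rev a @ b)) \<in> F_of C"
      using X by (auto simp: mem_F_of)
    ultimately show "x \<in> F_of C"
      using swap[OF X] by simp
  qed
qed

lemma C_of_F_of: "C_of (F_of C) = C"
proof (intro equalityI subsetI)
  fix X assume X: "X \<in> C_of (F_of C)"
  obtain K a b where X_eq: "X = (K, a, b)" by (cases X)
  with X have wf: "wf_bgraph (K, a, b)" and "(K, red (rev a @ b)) \<in> F_of C"
    by (simp_all add: mem_C_of)
  then obtain w where w: "(K, [], w) \<in> C" "red (rev a @ b) = red w"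
    unfolding mem_F_of_skew by blast
  have "(K, [], red w) \<in> C"
    using skew_red[of w K] skew_wf[OF w(1)] w(1) by simp
  then have "(K, [], rev a @ b) \<in> C"
    using skew_red[of "rev a @ b" K] wf w(2) by simp
  then show "X \<in> C"
    using X_eq skew_bend[of K a b] by simp
next
  fix X assume X: "X \<in> C"
  obtain K a b where X_eq: "X = (K, a, b)" by (cases X)
  with X have "(K, red (rev a @ b)) \<in> F_of C"
    unfolding mem_F_of by blast
  with X X_eq show "X \<in> C_of (F_of C)"
    using skew_wf[of K a b] by (simp add: mem_C_of)
qed

end

section \<open>Graph fibrations\<close>

context
  fixes F assumes fib: "graph_fibration F"
begin

lemma fib_rep: "gfam_rep F"
  using fib by (simp add: graph_fibration_def)

lemma fib_wf: "(K, g) \<in> F \<Longrightarrow> wf_graph K \<and> set g \<subseteq> V K \<and> red g = g"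
  by (rule gfam_rep_wf[OF fib_rep])

lemma fib_normal: "(K, g) \<in> F \<Longrightarrow> Fib F K \<lhd> Z2F (V K)"
  using fib fib_wf unfolding graph_fibration_def Fib_def by blast

lemma fib_one: "(K, g) \<in> F \<Longrightarrow> (K, []) \<in> F"
  using normal_Z2F_one[OF fib_normal] by (simp add: Fib_def)

lemma fib_mult: "(K, g) \<in> F \<Longrightarrow> (K, h) \<in> F \<Longrightarrow> (K, red (g @ h)) \<in> F"
  using normal_Z2F_mult[OF fib_normal] by (simp add: Fib_def)

lemma fib_inv: "(K, g) \<in> F \<Longrightarrow> (K, red (rev g)) \<in> F"
  using normal_Z2F_inv[OF fib_normal] by (simp add: Fib_def)

lemma fib_conj: "(K, h) \<in> F \<Longrightarrow> set v \<subseteq> V K \<Longrightarrow> (K, red (v @ h @ rev v)) \<in> F"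
  using normal_Z2F_conj[OF fib_normal] by (simp add: Fib_def)

lemma fib_glue:
  assumes "(K, g) \<in> F" and "(H, h) \<in> F" and "vertex_overlap K H f"
  shows "(glue K H f, red (map (glK K H f) g @ map (glH K H f) h)) \<in> F"
proof -
  have "(glue K H f, gmul (gmap (glK K H f) g) (gmap (glH K H f) h)) \<in> F"
    using fib assms unfolding graph_fibration_def by blast
  then show ?thesis by (simp add: gmul_def gmap_def)
qed

lemma C_of_swapped: "C_of F = {(K, a, b). wf_bgraph (K, a, b) \<and> (K, gmul (gw b) (ginv (gw a))) \<in> F}"
proof -
  have "(K, red (rev a @ b)) \<in> F \<longleftrightarrow> (K, red (b @ rev a)) \<in> F" if "wf_bgraph (K, a, b)" for K a b
  proof (cases "Fib F K = {}")
    case False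
    then obtain g where "(K, g) \<in> F" by (auto simp: Fib_def)
    from normal_Z2F_swap[OF fib_normal[OF this]] show ?thesis
      using that by (simp add: Fib_def)
  qed (simp add: Fib_def)
  then show ?thesis
    by (auto simp: C_of_def gmul_ginv_gw gmul_gw_ginv)
qed

lemma C_of_wf: "(K, a, b) \<in> C_of F \<Longrightarrow> wf_graph K \<and> set a \<subseteq> V K \<and> set b \<subseteq> V K"
  by (simp add: mem_C_of)

lemma C_of_glue_left:
  assumes X: "(K, a, b) \<in> C_of F" and "(H, h) \<in> F" and f: "vertex_overlap K H f"
  shows "(glue K H f, map (glK K H f) a, map (glK K H f) b) \<in> C_of F"
proof -
  have "(glue K H f, red (map (glK K H f) (red (rev a @ b)) @ map (glH K H f) [])) \<in> F"
    by (rule fib_glue[OF _ fib_one[OF \<open>(H, h) \<in> F\<close>] f]) (use X in \<open>simp add: mem_C_of\<close>)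
  then have "(glue K H f, red (rev (map (glK K H f) a) @ map (glK K H f) b)) \<in> F"
    by (simp add: rev_map)
  moreover have "wf_graph (glue K H f)"
    using X fib_wf[OF \<open>(H, h) \<in> F\<close>] by (simp add: mem_C_of wf_glue)
  ultimately show ?thesis
    using X glK_in_V[of _ K H f] by (auto simp: mem_C_of)
qed

lemma C_of_glue_right:
  assumes "(K, g) \<in> F" and Y: "(H, c, d) \<in> C_of F" and f: "vertex_overlap K H f"
  shows "(glue K H f, map (glH K H f) c, map (glH K H f) d) \<in> C_of F"
proof -
  have "(glue K H f, red (map (glK K H f) [] @ map (glH K H f) (red (rev c @ d)))) \<in> F"
    by (rule fib_glue[OF fib_one[OF \<open>(K, g) \<in> F\<close>] _ f]) (use Y in \<open>simp add: mem_C_of\<close>)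
  then have "(glue K H f, red (rev (map (glH K H f) c) @ map (glH K H f) d)) \<in> F"
    by (simp add: rev_map)
  moreover have "wf_graph (glue K H f)"
    using Y fib_wf[OF \<open>(K, g) \<in> F\<close>] by (simp add: mem_C_of wf_glue)
  ultimately show ?thesis
    using Y glH_in_V[of _ H K f] by (auto simp: mem_C_of)
qed

text \<open>\<open>g\<^sub>a\<^sub>c\<^sup>-\<^sup>1 g\<^sub>b\<^sub>d = g\<^sub>c\<^sup>-\<^sup>1 (g\<^sub>a\<^sup>-\<^sup>1 g\<^sub>b) g\<^sub>c \<cdot> g\<^sub>c\<^sup>-\<^sup>1 g\<^sub>d\<close>\<close>
lemma C_of_append:
  assumes X: "(G, a, b) \<in> C_of F" and Y: "(G, c, d) \<in> C_of F"
  shows "(G, a @ c, b @ d) \<in> C_of F"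
proof -
  have "(G, red (rev c @ red (rev a @ b) @ rev (rev c))) \<in> F"
    using X Y by (intro fib_conj) (auto simp: mem_C_of)
  moreover have "(G, red (rev c @ d)) \<in> F"
    using Y by (simp add: mem_C_of)
  ultimately have "(G, red (rev c @ rev a @ b @ c @ rev c @ d)) \<in> F"
    using fib_mult by fastforce
  then have "(G, red (rev (a @ c) @ b @ d)) \<in> F"
    using red_cancel_word[of "rev c @ rev a @ b" c d] by simp
  with X Y show ?thesis
    by (simp add: mem_C_of)
qed

lemma C_of_compose_same:
  assumes X: "(G, a, b) \<in> C_of F" and Y: "(G, b, d) \<in> C_of F"
  shows "(G, a, d) \<in> C_of F"
proof -
  have "(G, red (rev a @ b)) \<in> F" "(G, red (rev b @ d)) \<in> F"
    using X Y by (simp_all add: mem_C_of)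
  then have "(G, red (rev a @ b @ rev b @ d)) \<in> F"
    using fib_mult by fastforce
  with X Y show ?thesis
    by (simp add: mem_C_of red_cancel_word)
qed

lemma bset_rep_C_of: "bset_rep (C_of F)"
  unfolding bset_rep_def
proof (intro conjI allI impI ballI)
  show "wf_bgraph X" if "X \<in> C_of F" for X
    using that by (auto simp: C_of_def)
  fix X Y \<phi> assume X: "X \<in> C_of F" and iso: "bgraph_iso \<phi> X Y"
  obtain K a b K' a' b' where XY: "X = (K, a, b)" "Y = (K', a', b')"
    by (cases X, cases Y)
  with iso have iso': "graph_iso \<phi> K K'" "a' = map \<phi> a" "b' = map \<phi> b"
    by auto
  have "(K', gmap \<phi> (red (rev a @ b))) \<in> F"
    using gfam_rep_iso[OF fib_rep _ iso'(1)] X XY by (simp add: mem_C_of)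
  then have el: "(K', red (rev a' @ b')) \<in> F"
    by (simp add: iso' gmap_def rev_map)
  moreover have "\<phi> ` V K = V K'"
    using iso'(1) by (simp add: graph_iso_def bij_betw_def)
  then have "set a' \<subseteq> V K'" "set b' \<subseteq> V K'"
    using C_of_wf[of K a b] X XY iso' by (metis image_mono set_map)+
  ultimately show "Y \<in> C_of F"
    using XY fib_wf[OF el] by (simp add: mem_C_of)
qed

lemma skew_graph_category_C_of: "skew_graph_category (C_of F)"
  unfolding skew_graph_category_def
proof (intro conjI allI impI ballI)
  have "(N1, []) \<in> F" "(N0, []) \<in> F"
    using fib by (simp_all add: graph_fibration_def)
  with fib_wf show "bset_rep (C_of F)" "bzero \<in> C_of F" "M11 \<in> C_of F" "M02 \<in> C_of F"
    using bset_rep_C_of by (auto simp: bzero_def M11_def M02_def mem_C_of M_def N1_def red_Cons)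
next
  fix X assume "X \<in> C_of F"
  then show "binv X \<in> C_of F"
    using fib_inv by (cases X) (fastforce simp: mem_C_of)
next
  fix K a b H c d f
  assume X: "(K, a, b) \<in> C_of F" and Y: "(H, c, d) \<in> C_of F" and f: "vertex_overlap K H f"
  have "(K, red (rev a @ b)) \<in> F" "(H, red (rev c @ d)) \<in> F"
    using X Y by (simp_all add: mem_C_of)
  from C_of_append[OF C_of_glue_left[OF X this(2) f] C_of_glue_right[OF this(1) Y f]]
  show "bfunion (K, a, b) f (H, c, d) \<in> C_of F"
    by simp
next
  fix K a b H c d
  assume X: "(K, a, b) \<in> C_of F" and Y: "(H, c, d) \<in> C_of F" and ker: "same_ker b c"
  define P where "P = {(b ! i, c ! i) | i. i < length b}"
  have wf: "set b \<subseteq> V K" "set c \<subseteq> V H" "length b = length c"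
    using C_of_wf[OF X] C_of_wf[OF Y] ker by (auto simp: same_ker_def)
  have f: "vertex_overlap K H P"
    unfolding P_def using vertex_overlap_same_ker[OF ker wf(1,2)] .
  have "(K, red (rev a @ b)) \<in> F" "(H, red (rev c @ d)) \<in> F"
    using X Y by (simp_all add: mem_C_of)
  with X Y f have "(glue K H P, map (glK K H P) a, map (glK K H P) b) \<in> C_of F"
    and "(glue K H P, map (glH K H P) c, map (glH K H P) d) \<in> C_of F"
    by (simp_all add: C_of_glue_left C_of_glue_right)
  moreover have "map (glK K H P) b = map (glH K H P) c"
    unfolding P_def by (rule map_glK_eq_map_glH[OF wf(3,1,2)])
  ultimately have "(glue K H P, map (glK K H P) a, map (glH K H P) d) \<in> C_of F"
    using C_of_compose_same by simp
  then show "bcomp (H, c, d) (K, a, b) \<in> C_of F"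
    by (simp add: P_def[symmetric] Let_def)
qed

lemma F_of_C_of: "F_of (C_of F) = F"
proof (intro equalityI subsetI)
  fix x assume "x \<in> F_of (C_of F)"
  then show "x \<in> F"
    by (auto simp: F_of_def C_of_def)
next
  fix x assume x: "x \<in> F"
  obtain K g where x_eq: "x = (K, g)" by (cases x)
  with x have "(K, [], g) \<in> C_of F" "g = red (rev [] @ g)"
    using fib_wf[of K g] by (simp_all add: mem_C_of)
  then show "x \<in> F_of (C_of F)"
    unfolding x_eq mem_F_of by blast
qed

lemma easy_iff_C_of_quotient_closed:
  "easy_fibration F \<longleftrightarrow>
    (\<forall>K a b R. (K, a, b) \<in> C_of F \<longrightarrow> equiv (V K) R \<longrightarrow> bquot R (K, a, b) \<in> C_of F)"
proof
  assume easy: "easy_fibration F"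
  show "\<forall>K a b R. (K, a, b) \<in> C_of F \<longrightarrow> equiv (V K) R \<longrightarrow> bquot R (K, a, b) \<in> C_of F"
  proof (intro allI impI)
    fix K a b R assume X: "(K, a, b) \<in> C_of F" and R: "equiv (V K) R"
    then have "(K, red (rev a @ b)) \<in> F"
      by (simp add: mem_C_of)
    with easy R have "gmap (qmap R) (red (rev a @ b)) \<in> Fib F (gquot R K)"
      unfolding easy_fibration_def Fib_def by blast
    then have "(gquot R K, red (rev (map (qmap R) a) @ map (qmap R) b)) \<in> F"
      by (simp add: Fib_def gmap_def rev_map)
    moreover have "wf_graph (gquot R K)"
      using X by (simp add: mem_C_of wf_gquot)
    ultimately show "bquot R (K, a, b) \<in> C_of F"
      using X by (auto simp: mem_C_of gquot_def)
  qed
next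
  assume quot: "\<forall>K a b R. (K, a, b) \<in> C_of F \<longrightarrow> equiv (V K) R \<longrightarrow> bquot R (K, a, b) \<in> C_of F"
  show "easy_fibration F"
    unfolding easy_fibration_def
  proof (intro conjI fib allI impI subsetI)
    fix K R y assume R: "equiv (V K) R" and "y \<in> gmap (qmap R) ` Fib F K"
    then obtain g where g: "(K, g) \<in> F" "y = gmap (qmap R) g"
      by (auto simp: Fib_def)
    then have "(K, [], g) \<in> C_of F"
      using fib_wf by (simp add: mem_C_of)
    with quot R have "(gquot R K, [], map (qmap R) g) \<in> C_of F"
      by fastforce
    with g show "y \<in> Fib F (gquot R K)"
      by (simp add: mem_C_of Fib_def gmap_def)
  qed
qed

lemma easy_iff_group_theoretical: "easy_fibration F \<longleftrightarrow> group_theoretical (C_of F)"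
  using easy_iff_C_of_quotient_closed graph_category_if_quotient_closed[OF skew_graph_category_C_of]
  unfolding group_theoretical_def by blast

end

theorem theorem2p13:
  shows "(\<forall>F. graph_fibration F \<longrightarrow>
            C_of F = {(K, a, b). wf_bgraph (K, a, b) \<and> (K, gmul (gw b) (ginv (gw a))) \<in> F}
          \<and> skew_graph_category (C_of F))
   \<and> (\<forall>C. skew_graph_category C \<longrightarrow>
            F_of C = {(K, gmul (gw b) (ginv (gw a))) | K a b. (K, a, b) \<in> C}
          \<and> F_of C = {(K, gw a) | K a. (K, [], a) \<in> C}
          \<and> graph_fibration (F_of C))
   \<and> (\<forall>F. graph_fibration F \<longrightarrow> F_of (C_of F) = F)
   \<and> (\<forall>C. skew_graph_category C \<longrightarrow> C_of (F_of C) = C)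
   \<and> (\<forall>F. graph_fibration F \<longrightarrow> (easy_fibration F \<longleftrightarrow> group_theoretical (C_of F)))"
proof (intro conjI allI impI)
  fix F assume F: "graph_fibration F"
  show "C_of F = {(K, a, b). wf_bgraph (K, a, b) \<and> (K, gmul (gw b) (ginv (gw a))) \<in> F}"
    by (rule C_of_swapped[OF F])
  show "skew_graph_category (C_of F)"
    by (rule skew_graph_category_C_of[OF F])
  show "F_of (C_of F) = F"
    by (rule F_of_C_of[OF F])
  show "easy_fibration F \<longleftrightarrow> group_theoretical (C_of F)"
    by (rule easy_iff_group_theoretical[OF F])
next
  fix C assume C: "skew_graph_category C"
  show "F_of C = {(K, gmul (gw b) (ginv (gw a))) | K a b. (K, a, b) \<in> C}"
    by (rule F_of_swapped[OF C])
  show "F_of C = {(K, gw a) | K a. (K, [], a) \<in> C}"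
    by (rule F_of_empty_inputs[OF C])
  show "graph_fibration (F_of C)"
    by (rule graph_fibration_F_of[OF C])
  show "C_of (F_of C) = C"
    by (rule C_of_F_of[OF C])
qed

end
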